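(* In the dynamic oligopoly model of the context with $\delta>1/2$ and $M(s)=\sum_{x\ge0}k(x)s(x)$, where $k\ge0$ is increasing and $k(x)\le C_kx^{p_k}$ for constants $C_k>0$, $p_k\ge0$: for every $m$ and every policy $g(\cdot,m):X\to A$, the Markov chain with kernel $W(x,g(x,m),\cdot)$ is irreducible, aperiodic and positive recurrent, hence has a unique invariant distribution $s^{m,g}$, and all moments of $s^{m,g}$ are bounded uniformly over $m$ and $g$. Consequently, with $a=0$, $d(x,y)=|x-y|$, $x_0=0$ and $p=2$, there exists $b>0$ such that for every $m\in[0,b]$ and policy $g$: $s^{m,g}$ is unique, $M(s^{0,g})\ge0$, $M(s^{b,g})\le b$, and $\sum_x x^2 s^{m,g}(x)\le C$ for a constant $C<\infty$ independent of $m$ and $g$.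
   Context: Dynamic oligopoly model. States $X=\{0,1,2,\dots\}$; actions $A=[\underline a,1]$ with $0<\underline a<1$. For $x\ge1$: $W(x,a,x+1)=\frac{(1-\delta)a}{1+a}$, $W(x,a,x)=\frac{1-\delta+\delta a}{1+a}$, $W(x,a,x-1)=\frac{\delta}{1+a}$, $W(x,a,y)=0$ otherwise; $W(0,a,1)=\frac{(1-\delta)a}{1+a}$, $W(0,a,0)=1-W(0,a,1)$; $\delta\in(0,1)$. A policy is any map $x\mapsto g(x,m)\in A$. *)

theory Defs
  imports "HOL-Analysis.Analysis"
begin

definition W :: "real \<Rightarrow> nat \<Rightarrow> real \<Rightarrow> nat \<Rightarrow> real" where
  "W \<delta> x a y =
     (if x = 0 then
        (if y = 1 then (1 - \<delta>) * a / (1 + a)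
         else if y = 0 then 1 - (1 - \<delta>) * a / (1 + a) else 0)
      else
        (if y = x + 1 then (1 - \<delta>) * a / (1 + a)
         else if y = x then (1 - \<delta> + \<delta> * a) / (1 + a)
         else if y + 1 = x then \<delta> / (1 + a) else 0))"

definition kern :: "real \<Rightarrow> (nat \<Rightarrow> real \<Rightarrow> real) \<Rightarrow> real \<Rightarrow> nat \<Rightarrow> nat \<Rightarrow> real" where
  "kern \<delta> g m = (\<lambda>x y. W \<delta> x (g x m) y)"

primrec Pn :: "(nat \<Rightarrow> nat \<Rightarrow> real) \<Rightarrow> nat \<Rightarrow> nat \<Rightarrow> nat \<Rightarrow> real" where
  "Pn P 0 x y = (if x = y then 1 else 0)"
| "Pn P (Suc n) x y = (\<Sum>\<^sub>\<infinity>z. P x z * Pn P n z y)"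

text \<open>First-passage probabilities: probability, starting at x, of the first visit
  to y (at a positive time) occurring at time n.\<close>
primrec fp :: "(nat \<Rightarrow> nat \<Rightarrow> real) \<Rightarrow> nat \<Rightarrow> nat \<Rightarrow> nat \<Rightarrow> real" where
  "fp P 0 x y = 0"
| "fp P (Suc n) x y = (if n = 0 then P x y else (\<Sum>\<^sub>\<infinity>z\<in>-{y}. P x z * fp P n z y))"

definition irreducible_mc :: "(nat \<Rightarrow> nat \<Rightarrow> real) \<Rightarrow> bool" where
  "irreducible_mc P \<longleftrightarrow> (\<forall>x y. \<exists>n. Pn P n x y > 0)"

definition period :: "(nat \<Rightarrow> nat \<Rightarrow> real) \<Rightarrow> nat \<Rightarrow> nat" where
  "period P x = Gcd {n. 0 < n \<and> Pn P n x x > 0}"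

definition aperiodic_mc :: "(nat \<Rightarrow> nat \<Rightarrow> real) \<Rightarrow> bool" where
  "aperiodic_mc P \<longleftrightarrow> (\<forall>x. period P x = 1)"

definition positive_recurrent_mc :: "(nat \<Rightarrow> nat \<Rightarrow> real) \<Rightarrow> bool" where
  "positive_recurrent_mc P \<longleftrightarrow>
     (\<forall>x. (\<lambda>n. fp P n x x) sums 1 \<and> summable (\<lambda>n. real n * fp P n x x))"

definition stationary :: "(nat \<Rightarrow> nat \<Rightarrow> real) \<Rightarrow> (nat \<Rightarrow> real) \<Rightarrow> bool" where
  "stationary P s \<longleftrightarrow> (\<forall>x. 0 \<le> s x) \<and> s sums 1 \<and>
     (\<forall>y. ((\<lambda>x. s x * P x y) has_sum s y) UNIV)"

definition invdist :: "(nat \<Rightarrow> nat \<Rightarrow> real) \<Rightarrow> nat \<Rightarrow> real" where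
  "invdist P = (THE s. stationary P s)"

definition Magg :: "(nat \<Rightarrow> real) \<Rightarrow> (nat \<Rightarrow> real) \<Rightarrow> real" where
  "Magg k s = (\<Sum>x. k x * s x)"

text \<open>x^p for real exponent with the convention 0^0 = 1.\<close>
definition rpow :: "real \<Rightarrow> real \<Rightarrow> real" where
  "rpow x p = (if p = 0 then 1 else x powr p)"

end

(*
  Whatever the policy, the kernel W(x, g(x,m), .) is a birth-death chain on the naturals whose
  up-rate (1-\<delta>)a/(1+a) is at least (1-\<delta>)a_lo/2, whose down-rate \<delta>/(1+a) exceeds the up-rate
  by at least \<delta> - 1/2 > 0, and whose rate ratios up(x)/dn(x+1) are at most \<rho> = (1-\<delta>)/\<delta> < 1.
  Positive rates give irreducibility, positive holding probabilities aperiodicity, and a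
  Foster-Lyapunov function (linear above the target state, geometric below it) positive
  recurrence. Detailed balance determines the stationary distribution as the normalised
  products of rate ratios, which are dominated by \<rho>^x; hence every polynomial moment is bounded
  by the corresponding moment of the geometric sequence, uniformly in g and m. Since k grows at
  most polynomially, the aggregate M(s^{m,g}) is bounded by one such moment, and b is taken
  above that bound.
*)
theory Submission
  imports Defs
begin

lemma infsum_finite_support:
  fixes f :: "'a \<Rightarrow> real"
  assumes "finite F" "\<And>z. z \<notin> F \<Longrightarrow> f z = 0"
  shows "infsum f A = sum f (A \<inter> F)"
  by (intro infsumI has_sum_finite_neutralI[where B="A \<inter> F"]) (use assms in auto)

lemma sum_weighted_telescope:
  "(\<Sum>k<N. real (Suc k) * (q k - q (Suc k))) = (\<Sum>k<N. q k) - real N * (q N :: real)"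
  by (induction N) (auto simp: algebra_simps)

lemma summable_power_times_geometric:
  fixes \<rho> :: real
  assumes "0 < \<rho>" "\<rho> < 1"
  shows "summable (\<lambda>x. real x ^ q * \<rho> ^ x)"
proof -
  define c where "c = (1 + \<rho>) / 2"
  have "c < 1" "\<rho> < c" using assms by (auto simp: c_def)
  have "(\<lambda>n. (1 + inverse (real n)) ^ q) \<longlonglongrightarrow> (1 + 0) ^ q"
    by (intro tendsto_intros lim_inverse_n)
  moreover have "1 < c / \<rho>" using assms \<open>\<rho> < c\<close> by simp
  ultimately have "eventually (\<lambda>n. (1 + inverse (real n)) ^ q < c / \<rho>) sequentially"
    by (intro order_tendstoD(2)) auto
  then obtain N where N: "\<And>n. N \<le> n \<Longrightarrow> (1 + inverse (real n)) ^ q < c / \<rho>"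
    by (auto simp: eventually_sequentially)
  show ?thesis
  proof (rule summable_ratio_test[where c=c and N="max N 1"])
    show "c < 1" by fact
    fix n assume n: "max N 1 \<le> n"
    have "real (Suc n) = (1 + inverse (real n)) * real n" using n by (simp add: field_simps)
    then have "real (Suc n) ^ q = (1 + inverse (real n)) ^ q * real n ^ q"
      by (simp only: power_mult_distrib)
    then have "norm (real (Suc n) ^ q * \<rho> ^ Suc n)
        = ((1 + inverse (real n)) ^ q * \<rho>) * (real n ^ q * \<rho> ^ n)"
      using assms by (simp add: algebra_simps)
    also have "\<dots> \<le> (c / \<rho> * \<rho>) * (real n ^ q * \<rho> ^ n)"
      using N[of n] n assms by (intro mult_right_mono mult_left_mono) auto
    also have "\<dots> = c * norm (real n ^ q * \<rho> ^ n)" using assms by simp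
    finally show "norm (real (Suc n) ^ q * \<rho> ^ Suc n) \<le> c * norm (real n ^ q * \<rho> ^ n)" .
  qed
qed

text \<open>If f n = P(T = n) and q n = P(T > n) for a time T \<ge> 1, bounded partial sums of q
  mean that T is finite almost surely and has finite mean.\<close>
lemma sums_and_summable_mean_of_tails:
  fixes q f :: "nat \<Rightarrow> real"
  assumes q_nonneg: "\<And>n. 0 \<le> q n" and partial_sums: "\<And>N. (\<Sum>n<N. q n) \<le> B"
    and f_nonneg: "\<And>n. 0 \<le> f n" and f_0: "f 0 = 0" and f_Suc: "\<And>n. f (Suc n) = q n - q (Suc n)"
  shows "f sums q 0" and "summable (\<lambda>n. real n * f n)"
proof -
  have "summable q"
    by (rule bounded_imp_summable[where B=B])
       (use q_nonneg partial_sums[of "Suc _"] in \<open>auto simp: lessThan_Suc_atMost\<close>)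
  then have "q \<longlonglongrightarrow> 0" by (rule summable_LIMSEQ_zero)
  then have "(\<lambda>n. f (Suc n)) sums (q 0 - 0)" unfolding f_Suc by (rule telescope_sums')
  then show "f sums q 0" using f_0 by (subst (asm) sums_Suc_iff) simp
  have "summable (\<lambda>n. real (Suc n) * f (Suc n))"
  proof (rule bounded_imp_summable[where B=B])
    show "0 \<le> real (Suc n) * f (Suc n)" for n using f_nonneg[of "Suc n"] by simp
    show "(\<Sum>k\<le>n. real (Suc k) * f (Suc k)) \<le> B" for n
    proof -
      have "(\<Sum>k\<le>n. real (Suc k) * f (Suc k)) = (\<Sum>k<Suc n. real (Suc k) * (q k - q (Suc k)))"
        by (simp only: f_Suc lessThan_Suc_atMost)
      also have "\<dots> = (\<Sum>k<Suc n. q k) - real (Suc n) * q (Suc n)" by (rule sum_weighted_telescope)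
      also have "\<dots> \<le> B"
        using partial_sums[of "Suc n"] mult_nonneg_nonneg[OF _ q_nonneg, of "real (Suc n)" "Suc n"]
        by simp
      finally show ?thesis .
    qed
  qed
  then show "summable (\<lambda>n. real n * f n)"
    using summable_Suc_iff[of "\<lambda>n. real n * f n"] by (simp del: of_nat_Suc)
qed

section \<open>Birth-death chains on the naturals\<close>

text \<open>The probability that the chain started in z does not visit y at times 1, ..., n.\<close>
primrec no_visit :: "(nat \<Rightarrow> nat \<Rightarrow> real) \<Rightarrow> nat \<Rightarrow> nat \<Rightarrow> nat \<Rightarrow> real" where
  "no_visit P y 0 z = 1"
| "no_visit P y (Suc n) z = (\<Sum>\<^sub>\<infinity>w\<in>-{y}. P z w * no_visit P y n w)"

definition neighbours :: "nat \<Rightarrow> nat set" where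
  "neighbours x = {x - 1, x, Suc x}" \<comment> \<open>truncated subtraction: neighbours 0 = {0, 1}\<close>

lemma finite_neighbours [simp]: "finite (neighbours x)"
  by (simp add: neighbours_def)

locale birth_death_chain =
  fixes up dn :: "nat \<Rightarrow> real" and u e \<rho> :: real
  assumes u_pos: "0 < u" and up_ge: "\<And>x. u \<le> up x"
    and dn_pos: "\<And>x. 0 < dn x" and up_dn_lt_1: "\<And>x. up x + dn x < 1"
    and e_pos: "0 < e" and drift: "\<And>x. e \<le> dn x - up x"
    and rho_lt_1: "\<rho> < 1" and up_le_rho_dn: "\<And>x. up x \<le> \<rho> * dn (Suc x)"
begin

definition K :: "nat \<Rightarrow> nat \<Rightarrow> real" where
  "K x y = (if x = 0 then (if y = 1 then up 0 else if y = 0 then 1 - up 0 else 0)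
     else (if y = Suc x then up x else if y = x then 1 - up x - dn x
     else if Suc y = x then dn x else 0))"

lemma up_pos: "0 < up x" using u_pos up_ge[of x] by linarith
lemma up_lt_1: "up x < 1" using dn_pos[of x] up_dn_lt_1[of x] by linarith
lemma dn_lt_1: "dn x < 1" using up_pos[of x] up_dn_lt_1[of x] by linarith

lemma K_nonneg: "0 \<le> K x y"
  using up_pos[of x] up_lt_1[of x] dn_pos[of x] up_dn_lt_1[of x] by (auto simp: K_def)

lemma K_diag_pos: "0 < K x x"
  using up_lt_1[of x] up_dn_lt_1[of x] by (auto simp: K_def)

lemma K_eq_0_row: "y \<notin> neighbours x \<Longrightarrow> K x y = 0"
  by (auto simp: K_def neighbours_def)

lemma K_eq_0_column: "x \<notin> neighbours y \<Longrightarrow> K x y = 0"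
  by (auto simp: K_def neighbours_def)

lemma infsum_row: "(\<Sum>\<^sub>\<infinity>z\<in>A. K x z * h z) = (\<Sum>z\<in>A \<inter> neighbours x. K x z * h z)"
  by (rule infsum_finite_support[OF finite_neighbours]) (simp add: K_eq_0_row)

lemma sum_row: "(\<Sum>z\<in>neighbours x. K x z * h z) = (if x = 0 then (1 - up 0) * h 0 + up 0 * h 1
   else dn x * h (x - 1) + (1 - up x - dn x) * h x + up x * h (Suc x))"
  by (cases x) (auto simp: neighbours_def K_def)

lemma sum_column: "(\<Sum>x\<in>neighbours y. f x * K x y) = (if y = 0 then f 0 * (1 - up 0) + f 1 * dn 1
   else f (y - 1) * up (y - 1) + f y * (1 - up y - dn y) + f (Suc y) * dn (Suc y))"
  by (cases y) (auto simp: neighbours_def K_def)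

lemma has_sum_column: "((\<lambda>x. f x * K x y) has_sum (\<Sum>x\<in>neighbours y. f x * K x y)) UNIV"
  by (rule has_sum_finite_neutralI[where B="neighbours y"]) (auto simp: K_eq_0_column)

lemma sum_row_minus: "(\<Sum>w\<in>-{y} \<inter> neighbours z. K z w) = 1 - K z y"
proof -
  have "(\<Sum>w\<in>neighbours z. K z w)
      = (\<Sum>w\<in>neighbours z \<inter> {y}. K z w) + (\<Sum>w\<in>neighbours z - {y}. K z w)"
    by (rule sum.Int_Diff) simp
  moreover have "(\<Sum>w\<in>neighbours z \<inter> {y}. K z w) = K z y"
    by (cases "y \<in> neighbours z") (auto simp: K_eq_0_row)
  moreover have "neighbours z - {y} = -{y} \<inter> neighbours z" by auto
  moreover have "(\<Sum>w\<in>neighbours z. K z w) = 1" using sum_row[of z "\<lambda>_. 1"] by auto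
  ultimately show ?thesis by simp
qed

lemma Pn_Suc: "Pn K (Suc n) x y = (\<Sum>z\<in>neighbours x. K x z * Pn K n z y)"
  using infsum_row[where A=UNIV] by simp

lemma Pn_nonneg: "0 \<le> Pn K n x y"
proof (induction n arbitrary: x)
  case (Suc n)
  then show ?case unfolding Pn_Suc by (intro sum_nonneg mult_nonneg_nonneg K_nonneg)
qed simp

lemma Pn_Suc_ge: "K x w * Pn K n w y \<le> Pn K (Suc n) x y"
proof (cases "w \<in> neighbours x")
  case True
  then show ?thesis unfolding Pn_Suc
    by (intro member_le_sum) (auto intro: mult_nonneg_nonneg K_nonneg Pn_nonneg)
next
  case False
  then show ?thesis using Pn_nonneg[of "Suc n" x y] by (simp add: K_eq_0_row)
qed

lemma Pn_upwards_pos: "0 < Pn K d x (x + d)"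
proof (induction d arbitrary: x)
  case (Suc d)
  have "0 < K x (Suc x)" using up_pos[of x] by (auto simp: K_def)
  then have "0 < K x (Suc x) * Pn K d (Suc x) (Suc x + d)" using Suc[of "Suc x"] by simp
  also have "\<dots> \<le> Pn K (Suc d) x (x + Suc d)" using Pn_Suc_ge[of x "Suc x" d] by simp
  finally show ?case .
qed simp

lemma Pn_downwards_pos: "0 < Pn K d (x + d) x"
proof (induction d arbitrary: x)
  case (Suc d)
  have "0 < K (x + Suc d) (x + d)" using dn_pos[of "x + Suc d"] by (auto simp: K_def)
  then have "0 < K (x + Suc d) (x + d) * Pn K d (x + d) x" using Suc by simp
  also have "\<dots> \<le> Pn K (Suc d) (x + Suc d) x" by (rule Pn_Suc_ge)
  finally show ?case .
qed simp

lemma irreducible: "irreducible_mc K"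
  unfolding irreducible_mc_def
proof (intro allI)
  fix x y
  show "\<exists>n. 0 < Pn K n x y"
  proof (cases "x \<le> y")
    case True
    then show ?thesis using Pn_upwards_pos[of "y - x" x] by (intro exI[of _ "y - x"]) simp
  next
    case False
    then show ?thesis using Pn_downwards_pos[of "x - y" y] by (intro exI[of _ "x - y"]) simp
  qed
qed

lemma aperiodic: "aperiodic_mc K"
  unfolding aperiodic_mc_def period_def
proof
  fix x
  have "K x x * Pn K 0 x x \<le> Pn K 1 x x" using Pn_Suc_ge[of x x 0 x] by simp
  then have "1 \<in> {n. 0 < n \<and> 0 < Pn K n x x}" using K_diag_pos[of x] by simp
  then have "Gcd {n. 0 < n \<and> 0 < Pn K n x x} dvd 1" by (rule Gcd_dvd)
  then show "Gcd {n. 0 < n \<and> 0 < Pn K n x x} = 1" by simp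
qed

lemma no_visit_Suc: "no_visit K y (Suc n) z = (\<Sum>w\<in>-{y} \<inter> neighbours z. K z w * no_visit K y n w)"
  by (simp add: infsum_row)

lemma no_visit_nonneg: "0 \<le> no_visit K y n z"
proof (induction n arbitrary: z)
  case (Suc n)
  then show ?case unfolding no_visit_Suc by (intro sum_nonneg mult_nonneg_nonneg K_nonneg)
qed simp

lemma fp_nonneg: "0 \<le> fp K n z y"
  by (induction n arbitrary: z) (auto simp: K_nonneg intro!: infsum_nonneg mult_nonneg_nonneg)

lemma fp_eq_no_visit_diff: "fp K (Suc n) z y = no_visit K y n z - no_visit K y (Suc n) z"
proof (induction n arbitrary: z)
  case 0
  show ?case using sum_row_minus[where y=y and z=z] by (simp only: no_visit_Suc) simp
next
  case (Suc n)
  have "fp K (Suc (Suc n)) z y = (\<Sum>w\<in>-{y} \<inter> neighbours z. K z w * fp K (Suc n) w y)"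
    by (simp add: infsum_row)
  also have "\<dots> = (\<Sum>w\<in>-{y} \<inter> neighbours z. K z w * no_visit K y n w - K z w * no_visit K y (Suc n) w)"
    using Suc by (simp add: right_diff_distrib)
  also have "\<dots> = no_visit K y (Suc n) z - no_visit K y (Suc (Suc n)) z"
    by (simp only: sum_subtractf no_visit_Suc)
  finally show ?case .
qed

lemma sum_no_visit_lessThan_Suc:
  "(\<Sum>n<Suc N. no_visit K y n z)
     = 1 + (\<Sum>w\<in>-{y} \<inter> neighbours z. K z w * (\<Sum>n<N. no_visit K y n w))"
proof -
  have "(\<Sum>n<Suc N. no_visit K y n z) = no_visit K y 0 z + (\<Sum>n<N. no_visit K y (Suc n) z)"
    by (rule sum.lessThan_Suc_shift)
  also have "\<dots> = 1 + (\<Sum>w\<in>-{y} \<inter> neighbours z. K z w * (\<Sum>n<N. no_visit K y n w))"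
    by (simp only: no_visit_Suc no_visit.simps(1) sum_distrib_left) (subst sum.swap, simp)
  finally show ?thesis .
qed

text \<open>Foster's criterion: a nonnegative V with drift at most -1 off y bounds the expected
  return time to y, which is the sum of the no-visit probabilities.\<close>
lemma sum_no_visit_le_Lyapunov:
  assumes V_nonneg: "\<And>w. 0 \<le> V w"
    and V_drift: "\<And>z. z \<noteq> y \<Longrightarrow> 1 + (\<Sum>w\<in>neighbours z. K z w * V w) \<le> V z"
  shows "(\<Sum>n<N. no_visit K y n y) \<le> 1 + (\<Sum>w\<in>neighbours y. K y w * V w)"
proof -
  have compare: "(\<Sum>w\<in>-{y} \<inter> neighbours z. K z w * (\<Sum>n<N. no_visit K y n w))
      \<le> (\<Sum>w\<in>neighbours z. K z w * V w)"
    if IH: "\<And>w. w \<noteq> y \<Longrightarrow> (\<Sum>n<N. no_visit K y n w) \<le> V w" for N z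
  proof -
    have "(\<Sum>w\<in>-{y} \<inter> neighbours z. K z w * (\<Sum>n<N. no_visit K y n w))
        \<le> (\<Sum>w\<in>-{y} \<inter> neighbours z. K z w * V w)"
      by (intro sum_mono mult_left_mono IH K_nonneg) auto
    also have "\<dots> \<le> (\<Sum>w\<in>neighbours z. K z w * V w)"
      by (intro sum_mono2) (auto intro: mult_nonneg_nonneg K_nonneg V_nonneg)
    finally show ?thesis .
  qed
  have off_target: "z \<noteq> y \<Longrightarrow> (\<Sum>n<N. no_visit K y n z) \<le> V z" for N z
  proof (induction N arbitrary: z)
    case (Suc N)
    have "(\<Sum>n<Suc N. no_visit K y n z) \<le> 1 + (\<Sum>w\<in>neighbours z. K z w * V w)"
      unfolding sum_no_visit_lessThan_Suc using compare[of N z] Suc.IH by simp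
    also have "\<dots> \<le> V z" using V_drift Suc.prems by blast
    finally show ?case .
  qed (use V_nonneg in simp)
  show ?thesis
  proof (cases N)
    case 0
    have "0 \<le> (\<Sum>w\<in>neighbours y. K y w * V w)"
      by (intro sum_nonneg mult_nonneg_nonneg K_nonneg V_nonneg)
    then show ?thesis using 0 by simp
  next
    case (Suc M)
    have "(\<Sum>w\<in>-{y} \<inter> neighbours y. K y w * (\<Sum>n<M. no_visit K y n w))
        \<le> (\<Sum>w\<in>neighbours y. K y w * V w)"
      by (rule compare) (rule off_target)
    then show ?thesis
      using Suc sum_no_visit_lessThan_Suc[where N=M and z=y] by (simp del: sum.lessThan_Suc)
  qed
qed

definition growth :: real where "growth = 2 / u"

text \<open>Above y the drift of the linear part is at most -1 because dn - up \<ge> e; below y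
  the upward rate is at least u, so the geometric weights growth^(j+1) overcome the
  occasional step down.\<close>
definition V :: "nat \<Rightarrow> nat \<Rightarrow> real" where
  "V y z = (if y \<le> z then (real z - real y) / e else 0) + (\<Sum>j\<in>{z..<y}. growth ^ Suc j)"

lemma growth_ge_1: "1 \<le> growth"
  using u_pos up_ge[of 0] up_lt_1[of 0] by (simp add: growth_def)

lemma up_times_growth: "2 \<le> up x * growth"
proof -
  have "u * growth \<le> up x * growth" using up_ge growth_ge_1 by (intro mult_right_mono) auto
  then show ?thesis using u_pos by (simp add: growth_def)
qed

lemma V_nonneg: "0 \<le> V y z"
  unfolding V_def using e_pos growth_ge_1 by (intro add_nonneg_nonneg sum_nonneg) auto

lemma V_drift_above:
  assumes "y < z"
  shows "1 + (\<Sum>w\<in>neighbours z. K z w * V y w) \<le> V y z"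
proof -
  obtain z' where z: "z = Suc z'" "y \<le> z'" using assms by (cases z) auto
  define c where "c = real z' - real y"
  have V_eqs: "V y z' = c / e" "V y z = (c + 1) / e" "V y (Suc z) = (c + 2) / e"
    using z by (auto simp: V_def c_def)
  have "1 + (\<Sum>w\<in>neighbours z. K z w * V y w)
      = 1 + dn z * (c / e) + (1 - up z - dn z) * ((c + 1) / e) + up z * ((c + 2) / e)"
    using V_eqs z by (simp add: sum_row)
  also have "\<dots> = (c + 1) / e + (1 - (dn z - up z) / e)" using e_pos by (simp add: field_simps)
  also have "\<dots> \<le> (c + 1) / e" using drift[of z] e_pos by simp
  finally show ?thesis using V_eqs by simp
qed

lemma V_drift_below:
  assumes "z < y"
  shows "1 + (\<Sum>w\<in>neighbours z. K z w * V y w) \<le> V y z"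
proof -
  define G where "G = (\<Sum>j\<in>{Suc z..<y}. growth ^ Suc j)"
  have V_z: "V y z = growth ^ Suc z + G" and V_Suc: "V y (Suc z) = G"
    using assms sum.atLeast_Suc_lessThan[of z y "\<lambda>j. growth ^ Suc j"] by (auto simp: V_def G_def)
  show ?thesis
  proof (cases z)
    case 0
    then show ?thesis using V_z V_Suc up_times_growth[of 0] by (simp add: sum_row algebra_simps)
  next
    case (Suc z')
    have V_pred: "V y z' = growth ^ z + (growth ^ Suc z + G)"
      using Suc assms V_z sum.atLeast_Suc_lessThan[of z' y "\<lambda>j. growth ^ Suc j"] by (simp add: V_def)
    have pow_ge_1: "1 \<le> growth ^ z" using growth_ge_1 by simp
    have "2 * growth ^ z \<le> (up z * growth) * growth ^ z"
      using up_times_growth pow_ge_1 by (intro mult_right_mono) auto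
    then have "2 * growth ^ z \<le> up z * growth ^ Suc z" by (simp add: mult.assoc)
    moreover have "dn z * growth ^ z \<le> growth ^ z"
      using dn_lt_1[of z] pow_ge_1 by (simp add: mult_le_cancel_right1)
    ultimately have key: "1 + dn z * growth ^ z \<le> up z * growth ^ Suc z"
      using pow_ge_1 by linarith
    have "1 + (\<Sum>w\<in>neighbours z. K z w * V y w)
        = 1 + dn z * (growth ^ z + (growth ^ Suc z + G))
          + (1 - up z - dn z) * (growth ^ Suc z + G) + up z * G"
      using V_z V_Suc V_pred Suc by (simp add: sum_row)
    also have "\<dots> = (growth ^ Suc z + G) + (1 + dn z * growth ^ z - up z * growth ^ Suc z)"
      by (simp add: algebra_simps)
    also have "\<dots> \<le> V y z" using key V_z by simp
    finally show ?thesis .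
  qed
qed

lemma V_drift: "z \<noteq> y \<Longrightarrow> 1 + (\<Sum>w\<in>neighbours z. K z w * V y w) \<le> V y z"
  using V_drift_above V_drift_below by (cases "y < z") auto

lemma positive_recurrent: "positive_recurrent_mc K"
  unfolding positive_recurrent_mc_def
proof (intro allI)
  fix x
  have "(\<Sum>n<N. no_visit K x n x) \<le> 1 + (\<Sum>w\<in>neighbours x. K x w * V x w)" for N
    by (rule sum_no_visit_le_Lyapunov) (auto intro: V_nonneg V_drift)
  note tails = sums_and_summable_mean_of_tails[where q="\<lambda>n. no_visit K x n x" and f="\<lambda>n. fp K n x x",
      OF no_visit_nonneg this fp_nonneg _ fp_eq_no_visit_diff]
  show "(\<lambda>n. fp K n x x) sums 1 \<and> summable (\<lambda>n. real n * fp K n x x)"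
    using tails by simp
qed

definition weight :: "nat \<Rightarrow> real" where
  "weight x = (\<Prod>i<x. up i / dn (Suc i))"

lemma weight_0 [simp]: "weight 0 = 1" by (simp add: weight_def)

lemma weight_Suc: "weight (Suc x) = weight x * (up x / dn (Suc x))" by (simp add: weight_def)

lemma weight_pos: "0 < weight x"
  unfolding weight_def using up_pos dn_pos by (intro prod_pos) (auto intro: divide_pos_pos)

lemma weight_le_rho_power: "weight x \<le> \<rho> ^ x"
proof (induction x)
  case (Suc x)
  have "up x / dn (Suc x) \<le> \<rho>"
    using up_le_rho_dn[of x] dn_pos[of "Suc x"] by (simp add: divide_le_eq)
  then have "weight (Suc x) \<le> \<rho> ^ x * \<rho>" unfolding weight_Suc
    using Suc weight_pos[of x] up_pos[of x] dn_pos[of "Suc x"] by (intro mult_mono) auto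
  then show ?case by (simp add: mult.commute)
qed simp

lemma rho_pos: "0 < \<rho>"
proof (rule ccontr)
  assume "\<not> 0 < \<rho>"
  then have "\<rho> * dn 1 \<le> 0" using dn_pos[of 1] by (simp add: mult_nonpos_nonneg)
  then show False using up_le_rho_dn[of 0] up_pos[of 0] by simp
qed

lemma summable_weight: "summable weight"
  by (rule summable_comparison_test'[where g="\<lambda>n. \<rho> ^ n" and N=0])
     (use rho_pos rho_lt_1 weight_pos weight_le_rho_power in \<open>auto simp: less_imp_le\<close>)

lemma suminf_weight_ge_1: "1 \<le> suminf weight"
proof -
  have "sum weight {0} \<le> suminf weight"
    by (rule sum_le_suminf[OF summable_weight]) (auto intro: less_imp_le weight_pos)
  then show ?thesis by simp
qed

definition stat_dist :: "nat \<Rightarrow> real" where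
  "stat_dist x = weight x / suminf weight"

lemma stat_dist_nonneg: "0 \<le> stat_dist x"
  using weight_pos[of x] suminf_weight_ge_1 by (simp add: stat_dist_def)

lemma stat_dist_le_rho_power: "stat_dist x \<le> \<rho> ^ x"
proof -
  have "stat_dist x \<le> weight x" using weight_pos[of x] suminf_weight_ge_1
    by (simp add: stat_dist_def divide_le_eq mult_le_cancel_left1)
  then show ?thesis using weight_le_rho_power[of x] by linarith
qed

lemma detailed_balance_imp_invariant:
  assumes "\<And>x. f (Suc x) * dn (Suc x) = f x * up x"
  shows "(\<Sum>x\<in>neighbours y. f x * K x y) = f y"
proof (cases y)
  case 0
  have "(\<Sum>x\<in>neighbours y. f x * K x y) = f 0 * (1 - up 0) + f 1 * dn 1"
    using 0 by (simp add: sum_column)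
  also have "\<dots> = f 0" using assms[of 0] by (simp add: right_diff_distrib)
  finally show ?thesis using 0 by simp
next
  case (Suc y')
  have "(\<Sum>x\<in>neighbours y. f x * K x y)
      = f y' * up y' + f y * (1 - up y - dn y) + f (Suc y) * dn (Suc y)"
    using Suc by (simp add: sum_column)
  also have "\<dots> = f y" using assms[of y'] assms[of y] Suc by (simp add: right_diff_distrib)
  finally show ?thesis .
qed

lemma invariant_imp_detailed_balance:
  assumes "\<And>y. (\<Sum>x\<in>neighbours y. f x * K x y) = f y"
  shows "f (Suc x) * dn (Suc x) = f x * up x"
proof (induction x)
  case 0
  show ?case using assms[of 0] by (simp add: sum_column right_diff_distrib)
next
  case (Suc x)
  show ?case using assms[of "Suc x"] Suc by (simp add: sum_column right_diff_distrib)
qed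

lemma stationary_stat_dist: "stationary K stat_dist"
  unfolding stationary_def
proof (intro conjI allI)
  show "0 \<le> stat_dist x" for x by (rule stat_dist_nonneg)
  have "(\<lambda>x. weight x / suminf weight) sums (suminf weight / suminf weight)"
    by (intro sums_divide summable_sums summable_weight)
  then show "stat_dist sums 1" using suminf_weight_ge_1 by (simp add: stat_dist_def[abs_def])
  have balance: "stat_dist (Suc x) * dn (Suc x) = stat_dist x * up x" for x
    using dn_pos[of "Suc x"] by (simp add: stat_dist_def weight_Suc field_simps)
  show "((\<lambda>x. stat_dist x * K x y) has_sum stat_dist y) UNIV" for y
    using has_sum_column[of stat_dist y] detailed_balance_imp_invariant[of stat_dist, OF balance]
    by simp
qed

lemma stationary_unique:
  assumes st: "stationary K s"
  shows "s = stat_dist"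
proof -
  have "(\<Sum>x\<in>neighbours y. s x * K x y) = s y" for y
    using st has_sum_column[of s y] unfolding stationary_def by (blast intro: has_sum_unique)
  then have balance: "s (Suc x) * dn (Suc x) = s x * up x" for x
    by (rule invariant_imp_detailed_balance)
  define c where "c = s 0"
  have s_eq: "s x = c * weight x" for x
  proof (induction x)
    case (Suc x)
    have "s (Suc x) = s x * up x / dn (Suc x)"
      using balance[of x] dn_pos[of "Suc x"] by (simp add: eq_divide_eq)
    then show ?case using Suc by (simp add: weight_Suc)
  qed (simp add: c_def)
  have "(\<lambda>x. c * weight x) sums (c * suminf weight)"
    by (intro sums_mult summable_sums summable_weight)
  moreover have "s = (\<lambda>x. c * weight x)" by (rule ext) (rule s_eq)
  ultimately have "s sums (c * suminf weight)" by simp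
  moreover have "s sums 1" using st by (simp add: stationary_def)
  ultimately have "c * suminf weight = 1" by (rule sums_unique2)
  then have "c = 1 / suminf weight" using suminf_weight_ge_1 by (simp add: eq_divide_eq)
  then show ?thesis by (intro ext) (simp add: s_eq stat_dist_def)
qed

lemma ex1_stationary: "\<exists>!s. stationary K s"
  using stationary_stat_dist stationary_unique by blast

lemma invdist_eq: "invdist K = stat_dist"
  unfolding invdist_def using stationary_stat_dist stationary_unique by blast

lemma moment_invdist_le:
  assumes "summable (\<lambda>x. real x ^ q * \<rho> ^ x)"
  shows "summable (\<lambda>x. real x ^ q * invdist K x)"
    and "(\<Sum>x. real x ^ q * invdist K x) \<le> (\<Sum>x. real x ^ q * \<rho> ^ x)"
proof -
  have le: "real x ^ q * stat_dist x \<le> real x ^ q * \<rho> ^ x" for x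
    using stat_dist_le_rho_power[of x] by (intro mult_left_mono) auto
  show sm: "summable (\<lambda>x. real x ^ q * invdist K x)" unfolding invdist_eq
    by (rule summable_comparison_test'[OF assms, where N=0]) (use le stat_dist_nonneg in auto)
  show "(\<Sum>x. real x ^ q * invdist K x) \<le> (\<Sum>x. real x ^ q * \<rho> ^ x)"
    using sm le assms unfolding invdist_eq by (intro suminf_le)
qed

end

section \<open>The oligopoly chain\<close>

lemma up_rate_ge:
  fixes \<delta> a_lo a :: real assumes "\<delta> < 1" "0 < a_lo" "a_lo \<le> a" "a \<le> 1"
  shows "(1 - \<delta>) * a_lo / 2 \<le> (1 - \<delta>) * a / (1 + a)"
proof -
  have "a_lo * (1 + a) \<le> a * (1 + a)" using assms by (intro mult_right_mono) auto
  also have "\<dots> \<le> a * 2" using assms by (intro mult_left_mono) auto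
  finally have "a_lo / 2 \<le> a / (1 + a)" using assms by (simp add: field_simps)
  then have "(1 - \<delta>) * (a_lo / 2) \<le> (1 - \<delta>) * (a / (1 + a))"
    using assms by (intro mult_left_mono) auto
  then show ?thesis by simp
qed

lemma up_plus_down_rate_lt_1:
  fixes \<delta> a :: real assumes "0 < \<delta>" "\<delta> < 1" "0 < a"
  shows "(1 - \<delta>) * a / (1 + a) + \<delta> / (1 + a) < 1"
proof -
  have "(1 - \<delta>) * a = a - \<delta> * a" by (simp add: algebra_simps)
  then have "(1 - \<delta>) * a + \<delta> < 1 + a" using assms mult_pos_pos[of \<delta> a] by linarith
  then show ?thesis using assms by (simp add: add_divide_distrib[symmetric])
qed

lemma down_minus_up_rate_ge:
  fixes \<delta> a :: real assumes "1/2 < \<delta>" "\<delta> < 1" "0 < a" "a \<le> 1"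
  shows "(2 * \<delta> - 1) / 2 \<le> \<delta> / (1 + a) - (1 - \<delta>) * a / (1 + a)"
proof -
  have "(1 - \<delta>) * a \<le> 1 - \<delta>" using assms by (simp add: mult_left_le)
  moreover have "(2 * \<delta> - 1) * (1 + a) \<le> (2 * \<delta> - 1) * 2"
    using assms by (intro mult_left_mono) auto
  ultimately have "(2 * \<delta> - 1) * (1 + a) \<le> 2 * (\<delta> - (1 - \<delta>) * a)" by argo
  then show ?thesis using assms by (simp add: field_simps diff_divide_distrib[symmetric])
qed

lemma up_rate_le_ratio_down_rate:
  fixes \<delta> a b :: real assumes "0 < \<delta>" "\<delta> < 1" "0 < a" "a \<le> 1" "0 < b" "b \<le> 1"
  shows "(1 - \<delta>) * a / (1 + a) \<le> (1 - \<delta>) / \<delta> * (\<delta> / (1 + b))"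
proof -
  have "a * b \<le> 1" using assms by (intro mult_le_one) auto
  then have "a / (1 + a) \<le> 1 / (1 + b)" using assms by (simp add: field_simps)
  then have "(1 - \<delta>) * (a / (1 + a)) \<le> (1 - \<delta>) * (1 / (1 + b))"
    using assms by (intro mult_left_mono) auto
  then show ?thesis using assms by simp
qed

lemma hold_prob_eq:
  "0 < (a::real) \<Longrightarrow> (1 - \<delta> + \<delta> * a) / (1 + a) = 1 - (1 - \<delta>) * a / (1 + a) - \<delta> / (1 + a)"
proof -
  assume "0 < a"
  then have "1 - (1 - \<delta>) * a / (1 + a) - \<delta> / (1 + a) = ((1 + a) - (1 - \<delta>) * a - \<delta>) / (1 + a)"
    by (simp add: diff_divide_distrib)
  also have "(1 + a) - (1 - \<delta>) * a - \<delta> = 1 - \<delta> + \<delta> * a" by (simp add: algebra_simps)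
  finally show ?thesis by simp
qed

lemma kern_birth_death_chain:
  fixes \<delta> a_lo :: real and g :: "nat \<Rightarrow> real \<Rightarrow> real"
  assumes \<delta>: "1/2 < \<delta>" "\<delta> < 1" and a_lo: "0 < a_lo" "a_lo < 1"
    and g: "\<forall>x. g x m \<in> {a_lo..1}"
  defines "up \<equiv> \<lambda>x. (1 - \<delta>) * g x m / (1 + g x m)" and "dn \<equiv> \<lambda>x. \<delta> / (1 + g x m)"
  shows "birth_death_chain up dn ((1 - \<delta>) * a_lo / 2) ((2 * \<delta> - 1) / 2) ((1 - \<delta>) / \<delta>)"
    and "kern \<delta> g m = birth_death_chain.K up dn"
proof -
  have a: "a_lo \<le> g x m" "g x m \<le> 1" "0 < g x m" for x
    using g a_lo by (auto intro: less_le_trans)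
  show bdc: "birth_death_chain up dn ((1 - \<delta>) * a_lo / 2) ((2 * \<delta> - 1) / 2) ((1 - \<delta>) / \<delta>)"
    unfolding up_def dn_def
  proof
    show "0 < (1 - \<delta>) * a_lo / 2" "0 < (2 * \<delta> - 1) / 2" "(1 - \<delta>) / \<delta> < 1"
      using \<delta> a_lo by auto
    fix x
    show "(1 - \<delta>) * a_lo / 2 \<le> (1 - \<delta>) * g x m / (1 + g x m)"
      using \<delta> a_lo a[of x] by (intro up_rate_ge) auto
    show "0 < \<delta> / (1 + g x m)" using \<delta> a[of x] by simp
    show "(1 - \<delta>) * g x m / (1 + g x m) + \<delta> / (1 + g x m) < 1"
      using \<delta> a[of x] by (intro up_plus_down_rate_lt_1) auto
    show "(2 * \<delta> - 1) / 2 \<le> \<delta> / (1 + g x m) - (1 - \<delta>) * g x m / (1 + g x m)"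
      using \<delta> a[of x] by (intro down_minus_up_rate_ge) auto
    show "(1 - \<delta>) * g x m / (1 + g x m) \<le> (1 - \<delta>) / \<delta> * (\<delta> / (1 + g (Suc x) m))"
      using \<delta> a[of x] a[of "Suc x"] by (intro up_rate_le_ratio_down_rate) auto
  qed
  interpret birth_death_chain up dn "(1 - \<delta>) * a_lo / 2" "(2 * \<delta> - 1) / 2" "(1 - \<delta>) / \<delta>"
    by (fact bdc)
  show "kern \<delta> g m = K"
  proof (intro ext)
    fix x y
    show "kern \<delta> g m x y = K x y"
      unfolding kern_def W_def K_def using a[of x] by (auto simp: up_def dn_def hold_prob_eq)
  qed
qed

definition geometric_moment :: "real \<Rightarrow> nat \<Rightarrow> real" where
  "geometric_moment \<rho> q = (\<Sum>x. real x ^ q * \<rho> ^ x)"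

lemma geometric_moment_nonneg: "0 < \<rho> \<Longrightarrow> \<rho> < 1 \<Longrightarrow> 0 \<le> geometric_moment \<rho> q"
  unfolding geometric_moment_def by (intro suminf_nonneg summable_power_times_geometric) auto

context
  fixes \<delta> a_lo :: real and g :: "nat \<Rightarrow> real \<Rightarrow> real" and m :: real
  assumes \<delta>: "1/2 < \<delta>" "\<delta> < 1" and a_lo: "0 < a_lo" "a_lo < 1"
    and g: "\<forall>x. g x m \<in> {a_lo..1}"
begin

interpretation birth_death_chain
  "\<lambda>x. (1 - \<delta>) * g x m / (1 + g x m)" "\<lambda>x. \<delta> / (1 + g x m)"
  "(1 - \<delta>) * a_lo / 2" "(2 * \<delta> - 1) / 2" "(1 - \<delta>) / \<delta>"
  using \<delta> a_lo g by (rule kern_birth_death_chain(1))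

lemma kern_eq_K: "kern \<delta> g m = K"
  using \<delta> a_lo g by (rule kern_birth_death_chain(2))

lemma oligopoly_chain_ergodic:
  "irreducible_mc (kern \<delta> g m) \<and> aperiodic_mc (kern \<delta> g m) \<and>
   positive_recurrent_mc (kern \<delta> g m) \<and> (\<exists>!s. stationary (kern \<delta> g m) s)"
  unfolding kern_eq_K
  using irreducible aperiodic positive_recurrent ex1_stationary by blast

lemma oligopoly_moment_le:
  shows "summable (\<lambda>x. real x ^ q * invdist (kern \<delta> g m) x)"
    and "(\<Sum>x. real x ^ q * invdist (kern \<delta> g m) x) \<le> geometric_moment ((1 - \<delta>) / \<delta>) q"
proof -
  have "summable (\<lambda>x. real x ^ q * ((1 - \<delta>) / \<delta>) ^ x)"
    using \<delta> by (intro summable_power_times_geometric) auto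
  then show "summable (\<lambda>x. real x ^ q * invdist (kern \<delta> g m) x)"
    and "(\<Sum>x. real x ^ q * invdist (kern \<delta> g m) x) \<le> geometric_moment ((1 - \<delta>) / \<delta>) q"
    unfolding kern_eq_K geometric_moment_def
    by (rule moment_invdist_le)+
qed

end

lemma stationary_invdist:
  assumes "\<exists>!s. stationary P s"
  shows "stationary P (invdist P)"
  using assms unfolding invdist_def by (rule theI')

lemma rpow_le_1_plus_power_ceiling:
  assumes "0 \<le> p"
  shows "rpow (real x) p \<le> 1 + real x ^ nat \<lceil>p\<rceil>"
proof (cases "p = 0 \<or> x = 0")
  case False
  have "real x powr p \<le> real x powr real (nat \<lceil>p\<rceil>)"
    using False assms by (intro powr_mono) (auto simp: real_nat_ceiling_ge)
  also have "\<dots> = real x ^ nat \<lceil>p\<rceil>" using False by (simp add: powr_realpow)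
  finally show ?thesis using False by (simp add: rpow_def)
qed (auto simp: rpow_def)

lemma weighted_suminf_le_moment:
  fixes k s :: "nat \<Rightarrow> real"
  assumes "0 \<le> C" and k: "\<And>x. 0 \<le> k x" "\<And>x. k x \<le> C * (1 + real x ^ n)"
    and s: "\<And>x. 0 \<le> s x" "s sums 1"
    and moment: "summable (\<lambda>x. real x ^ n * s x)" "(\<Sum>x. real x ^ n * s x) \<le> B"
  shows "summable (\<lambda>x. k x * s x)" and "0 \<le> (\<Sum>x. k x * s x)"
    and "(\<Sum>x. k x * s x) \<le> C * (1 + B)"
proof -
  have le: "k x * s x \<le> C * (s x + real x ^ n * s x)" for x
    using mult_right_mono[OF k(2) s(1)] by (simp add: algebra_simps)
  have sum_bound: "(\<lambda>x. C * (s x + real x ^ n * s x)) sums (C * (1 + (\<Sum>x. real x ^ n * s x)))"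
    by (intro sums_mult sums_add s(2) summable_sums moment(1))
  show sm: "summable (\<lambda>x. k x * s x)"
    by (rule summable_comparison_test'[OF sums_summable[OF sum_bound], where N=0])
       (use le k s in auto)
  show "0 \<le> (\<Sum>x. k x * s x)" using k s by (intro suminf_nonneg sm) auto
  have "(\<Sum>x. k x * s x) \<le> C * (1 + (\<Sum>x. real x ^ n * s x))"
    using suminf_le[OF le sm sums_summable[OF sum_bound]] sums_unique[OF sum_bound] by simp
  also have "\<dots> \<le> C * (1 + B)" using \<open>0 \<le> C\<close> moment(2) by (intro mult_left_mono) auto
  finally show "(\<Sum>x. k x * s x) \<le> C * (1 + B)" .
qed

lemma oligopoly_aggregate_bounds:
  fixes \<delta> a_lo Ck pk :: real and k :: "nat \<Rightarrow> real"
  assumes \<delta>: "1/2 < \<delta>" "\<delta> < 1" and a_lo: "0 < a_lo" "a_lo < 1"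
    and k: "\<forall>x. 0 \<le> k x" "\<forall>x. k x \<le> Ck * rpow (real x) pk" "0 < Ck" "0 \<le> pk"
    and g: "\<forall>x. g x m \<in> {a_lo..1}"
  shows "summable (\<lambda>x. k x * invdist (kern \<delta> g m) x)"
    and "0 \<le> Magg k (invdist (kern \<delta> g m))"
    and "Magg k (invdist (kern \<delta> g m)) \<le> Ck * (1 + geometric_moment ((1 - \<delta>) / \<delta>) (nat \<lceil>pk\<rceil>))"
proof -
  have k_le: "k x \<le> Ck * (1 + real x ^ nat \<lceil>pk\<rceil>)" for x
  proof -
    have "Ck * rpow (real x) pk \<le> Ck * (1 + real x ^ nat \<lceil>pk\<rceil>)"
      using k(3,4) rpow_le_1_plus_power_ceiling by (intro mult_left_mono) auto
    then show ?thesis using k(2) order_trans by blast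
  qed
  have "stationary (kern \<delta> g m) (invdist (kern \<delta> g m))"
    using oligopoly_chain_ergodic[where g=g and m=m, OF \<delta> a_lo g] by (blast intro: stationary_invdist)
  then have "\<And>x. 0 \<le> invdist (kern \<delta> g m) x" "invdist (kern \<delta> g m) sums 1"
    by (simp_all add: stationary_def)
  note bounds = weighted_suminf_le_moment[OF _ _ k_le this oligopoly_moment_le[where g=g and m=m, OF \<delta> a_lo g]]
  show "summable (\<lambda>x. k x * invdist (kern \<delta> g m) x)"
    and "0 \<le> Magg k (invdist (kern \<delta> g m))"
    and "Magg k (invdist (kern \<delta> g m)) \<le> Ck * (1 + geometric_moment ((1 - \<delta>) / \<delta>) (nat \<lceil>pk\<rceil>))"
    using bounds k(1,3) unfolding Magg_def by auto
qed

lemma oligopoly_aggregate_threshold: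
  fixes \<delta> a_lo Ck pk :: real and k :: "nat \<Rightarrow> real"
  assumes \<delta>: "1/2 < \<delta>" "\<delta> < 1" and a_lo: "0 < a_lo" "a_lo < 1"
    and k: "\<forall>x. 0 \<le> k x" "\<forall>x. k x \<le> Ck * rpow (real x) pk" "0 < Ck" "0 \<le> pk"
  shows
    "\<exists>b>0. \<exists>C. \<forall>g. (\<forall>x m. g x m \<in> {a_lo..1}) \<longrightarrow>
         (\<forall>m\<in>{0..b}. (\<exists>!s. stationary (kern \<delta> g m) s) \<and>
             summable (\<lambda>x. real x ^ 2 * invdist (kern \<delta> g m) x) \<and>
             (\<Sum>x. real x ^ 2 * invdist (kern \<delta> g m) x) \<le> C) \<and>
         summable (\<lambda>x. k x * invdist (kern \<delta> g 0) x) \<and>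
         Magg k (invdist (kern \<delta> g 0)) \<ge> 0 \<and>
         summable (\<lambda>x. k x * invdist (kern \<delta> g b) x) \<and>
         Magg k (invdist (kern \<delta> g b)) \<le> b"
proof -
  define \<rho> where "\<rho> = (1 - \<delta>) / \<delta>"
  define b where "b = Ck * (1 + geometric_moment \<rho> (nat \<lceil>pk\<rceil>)) + 1"
  have "0 \<le> geometric_moment \<rho> (nat \<lceil>pk\<rceil>)"
    unfolding \<rho>_def using \<delta> by (intro geometric_moment_nonneg) auto
  then have "0 \<le> Ck * (1 + geometric_moment \<rho> (nat \<lceil>pk\<rceil>))" using \<open>0 < Ck\<close> by simp
  then have "0 < b" unfolding b_def by linarith
  have Magg_b: "Magg k (invdist (kern \<delta> g b)) \<le> b" if "\<forall>x. g x b \<in> {a_lo..1}" for g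
    using oligopoly_aggregate_bounds(3)[where g=g and m=b, OF \<delta> a_lo k that] unfolding b_def \<rho>_def by linarith
  show ?thesis
    by (rule exI[of _ b], rule conjI[OF \<open>0 < b\<close>], rule exI[of _ "geometric_moment \<rho> 2"])
       (use oligopoly_chain_ergodic[OF \<delta> a_lo] oligopoly_moment_le[OF \<delta> a_lo, where q=2]
          oligopoly_aggregate_bounds(1,2)[OF \<delta> a_lo k] Magg_b in \<open>auto simp: \<rho>_def\<close>)
qed

theorem mainTheorem6:
  fixes \<delta> a_lo Ck pk :: real and k :: "nat \<Rightarrow> real"
  assumes "1/2 < \<delta>" and "\<delta> < 1"
    and "0 < a_lo" and "a_lo < 1"
    and "\<forall>x. 0 \<le> k x" and "mono k"
    and "0 < Ck" and "0 \<le> pk"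
    and "\<forall>x. k x \<le> Ck * rpow (real x) pk"
  shows
    "(\<forall>g m. (\<forall>x. g x m \<in> {a_lo..1}) \<longrightarrow>
        irreducible_mc (kern \<delta> g m) \<and> aperiodic_mc (kern \<delta> g m) \<and>
        positive_recurrent_mc (kern \<delta> g m) \<and> (\<exists>!s. stationary (kern \<delta> g m) s))
     \<and> (\<forall>q::nat. \<exists>C. \<forall>g m. (\<forall>x. g x m \<in> {a_lo..1}) \<longrightarrow>
           summable (\<lambda>x. real x ^ q * invdist (kern \<delta> g m) x) \<and>
           (\<Sum>x. real x ^ q * invdist (kern \<delta> g m) x) \<le> C)
     \<and> (\<exists>b>0. \<exists>C. \<forall>g. (\<forall>x m. g x m \<in> {a_lo..1}) \<longrightarrow>
           (\<forall>m\<in>{0..b}. (\<exists>!s. stationary (kern \<delta> g m) s) \<and>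
               summable (\<lambda>x. \<bar>real x - 0\<bar> ^ 2 * invdist (kern \<delta> g m) x) \<and>
               (\<Sum>x. \<bar>real x - 0\<bar> ^ 2 * invdist (kern \<delta> g m) x) \<le> C) \<and>
           summable (\<lambda>x. k x * invdist (kern \<delta> g 0) x) \<and>
           Magg k (invdist (kern \<delta> g 0)) \<ge> 0 \<and>
           summable (\<lambda>x. k x * invdist (kern \<delta> g b) x) \<and>
           Magg k (invdist (kern \<delta> g b)) \<le> b)"
proof -
  note \<delta> = assms(1,2) and a_lo = assms(3,4) and k = assms(5,9,7,8)
  show ?thesis
    by (simp only: diff_zero abs_of_nat)
       (intro conjI, use oligopoly_chain_ergodic[OF \<delta> a_lo] in blast,
        use oligopoly_moment_le[OF \<delta> a_lo] in blast,
        use oligopoly_aggregate_threshold[OF \<delta> a_lo k] in blast)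
qed

end
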